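(* If $G$ is a finite non-cyclic group of prime power order with $\psi'(G)>\frac{19}{43}$, then $G$ is a $2$-group.
   Context: For a finite group $G$, $\psi(G)=\sum_{x\in G} o(x)$ and $\psi'(G)=\psi(G)/\psi(\mathcal{C}_{|G|})$, where $\mathcal{C}_n$ is the cyclic group of order $n$. *)

theory Defs
  imports "HOL-Algebra.Algebra"
begin

definition psi :: "('a, 'b) monoid_scheme \<Rightarrow> nat" where
  "psi G = (\<Sum>x\<in>carrier G. group.ord G x)"

text \<open>psi'(G) = psi(G) / psi(C_|G|), with C_n realised as the additive group of integers mod n.\<close>
definition psi' :: "('a, 'b) monoid_scheme \<Rightarrow> real" where
  "psi' G = real (psi G) / real (psi (integer_mod_group (order G)))"

end

(*
  Let G be non-cyclic of order p^k and q = p^(k-2). Every element order divides p^(k-1), since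
  otherwise G is cyclic, and at least q elements have order dividing q: either some x has order
  p^(k-1) and the cyclic subgroup generated by x^p supplies them, or every element does. Hence
  psi(G) <= q^2 + (p^k - q) p^(k-1). On the cyclic side, a in Z/n has order n / gcd(a, n), whence
  psi(C_n) = sum over d | n of d phi(d) >= p^k phi(p^k) + p^(k-1) phi(p^(k-1)) for n = p^k.
  For p >= 3 the quotient of these two bounds is below 19/43.
*)
theory Submission
  imports Defs "HOL-Number_Theory.Totient"
begin

lemma dvd_mult_iff_div_gcd_dvd:
  fixes n a m :: nat
  assumes "0 < n"
  shows "n dvd a * m \<longleftrightarrow> n div gcd a n dvd m"
proof -
  define g where "g = gcd a n"
  have "0 < g" using assms unfolding g_def by simp
  obtain n' a' where n: "n = n' * g" and a: "a = a' * g" and "coprime n' a'"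
    using gcd_coprime_exists[of a n] assms unfolding g_def by (auto simp: ac_simps)
  have "n dvd a * m \<longleftrightarrow> n' * g dvd (a' * m) * g"
    unfolding n a by (simp add: ac_simps)
  also have "\<dots> \<longleftrightarrow> n' dvd m"
    using \<open>0 < g\<close> \<open>coprime n' a'\<close> by (simp add: coprime_dvd_mult_right_iff)
  also have "n' = n div gcd a n"
    unfolding g_def[symmetric] using n \<open>0 < g\<close> by simp
  finally show ?thesis .
qed

lemma ord_integer_mod_group:
  assumes "a < n"
  shows "group.ord (integer_mod_group n) (int a) = n div gcd a n"
proof -
  interpret Z: group "integer_mod_group n" by simp
  have "int a \<in> carrier (integer_mod_group n)"
    using assms by (simp add: carrier_integer_mod_group)
  moreover have "(int m * int a) mod int n = 0 \<longleftrightarrow> n div gcd a n dvd m" for m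
    using dvd_mult_iff_div_gcd_dvd[of n a m] assms
    by (metis int_dvd_int_iff mod_eq_0_iff_dvd of_nat_mult mult.commute gr_zeroI not_less_zero)
  ultimately show ?thesis
    by (simp add: Z.ord_unique)
qed

lemma psi_integer_mod_group_eq_sum_gcd:
  assumes "0 < n"
  shows "psi (integer_mod_group n) = (\<Sum>k\<in>{0<..n}. n div gcd k n)"
  unfolding psi_def
proof (rule sym, rule sum.reindex_bij_witness[of _ "\<lambda>j. if j = 0 then n else nat j" "\<lambda>k. int (k mod n)"])
  show "int (k mod n) \<in> carrier (integer_mod_group n)" for k
    using assms by (simp add: carrier_integer_mod_group)
  show "group.ord (integer_mod_group n) (int (k mod n)) = n div gcd k n" for k
    using assms by (simp add: ord_integer_mod_group gcd.commute)
qed (use assms in \<open>auto simp: carrier_integer_mod_group le_less\<close>)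

lemma psi_integer_mod_group:
  assumes "0 < n"
  shows "psi (integer_mod_group n) = (\<Sum>d | d dvd n. d * totient d)"
proof -
  define A where "A = (\<lambda>d. {k\<in>{0<..n}. gcd k n = d})"
  have "{0<..n} = (\<Union>d\<in>{d. d dvd n}. A d)"
    by (auto simp: A_def)
  then have "psi (integer_mod_group n) = (\<Sum>k\<in>(\<Union>d\<in>{d. d dvd n}. A d). n div gcd k n)"
    using assms by (simp add: psi_integer_mod_group_eq_sum_gcd)
  also have "\<dots> = (\<Sum>d | d dvd n. \<Sum>k\<in>A d. n div gcd k n)"
    using assms by (intro sum.UNION_disjoint) (auto simp: A_def)
  also have "\<dots> = (\<Sum>d | d dvd n. (n div d) * totient (n div d))"
  proof (rule sum.cong)
    fix d assume "d \<in> {d. d dvd n}"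
    then have "card (A d) = totient (n div d)"
      unfolding A_def using assms by (intro card_gcd_eq_totient) simp_all
    then show "(\<Sum>k\<in>A d. n div gcd k n) = (n div d) * totient (n div d)"
      by (simp add: A_def)
  qed simp
  also have "\<dots> = (\<Sum>d | d dvd n. d * totient d)"
    using assms by (intro sum.reindex_bij_witness[of _ "(div) n" "(div) n"]) (auto elim: dvdE)
  finally show ?thesis .
qed

lemma (in group) cyclic_group_if_ord_eq_order:
  assumes "finite (carrier G)" and "x \<in> carrier G" and "ord x = order G"
  shows "cyclic_group G"
proof -
  have "generate G {x} = carrier G"
    using assms generate_incl[of "{x}"] generate_pow_card[OF assms(2)]
    by (intro card_subset_eq) (auto simp: order_def)
  then have "carrier G = range (\<lambda>n::int. x [^] n)"
    using generate_pow[OF assms(2)] by (simp add: full_SetCompr_eq)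
  then show ?thesis
    using cyclic_group assms(2) by blast
qed

lemma (in group) not_cyclic_ord_dvd_prime_power:
  assumes "finite (carrier G)" and "\<not> cyclic_group G"
    and "Factorial_Ring.prime p" and "order G = p ^ k" and "x \<in> carrier G"
  shows "ord x dvd p ^ (k - 1)"
proof -
  obtain i where "i \<le> k" and ord_x: "ord x = p ^ i"
    using ord_dvd_group_order[OF assms(5)] assms(3,4) divides_primepow_nat by auto
  moreover have "i \<noteq> k"
    using cyclic_group_if_ord_eq_order[OF assms(1,5)] assms(2,4) ord_x by auto
  ultimately show ?thesis
    by (simp add: le_imp_power_dvd)
qed

lemma (in group) not_cyclic_prime_power_order_2_le:
  assumes "finite (carrier G)" and "\<not> cyclic_group G"
    and "Factorial_Ring.prime p" and "order G = p ^ k"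
  shows "2 \<le> k"
proof (rule ccontr)
  assume "\<not> 2 \<le> k"
  then have "ord x = 1" if "x \<in> carrier G" for x
    using not_cyclic_ord_dvd_prime_power[OF assms that] by simp
  then have "carrier G = {\<one>}"
    using ord_eq_1 by blast
  then show False
    using assms(2) trivial_imp_cyclic_group[of G] is_group unfolding trivial_group_def by blast
qed

lemma (in group) ord_dvd_ord_if_in_generate:
  assumes "finite (carrier G)" and "z \<in> carrier G" and "y \<in> generate G {z}"
  shows "ord y dvd ord z"
proof -
  obtain n :: nat where "y = z [^] n"
    using generate_pow_on_finite_carrier[OF assms(1,2)] assms(3) by blast
  then have "y [^] ord z = \<one>"
    using assms(2) by (metis nat_pow_pow mult.commute pow_ord_eq_1 nat_pow_one)
  then show ?thesis
    using assms(2) \<open>y = z [^] n\<close> by (simp add: pow_eq_id)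
qed

lemma (in group) card_ord_dvd_prime_power_ge:
  assumes "finite (carrier G)" and "Factorial_Ring.prime p" and "order G = p ^ k" and "2 \<le> k"
    and exponent: "\<And>x. x \<in> carrier G \<Longrightarrow> ord x dvd p ^ (k - 1)"
  shows "p ^ (k - 2) \<le> card {y \<in> carrier G. ord y dvd p ^ (k - 2)}"
proof (cases "\<exists>x\<in>carrier G. ord x = p ^ (k - 1)")
  case True
  moreover have "p ^ (k - 1) = p ^ (k - 2) * p"
    using \<open>2 \<le> k\<close> by (simp flip: power_Suc2 add: Suc_diff_Suc numeral_2_eq_2)
  ultimately obtain x where x: "x \<in> carrier G" "ord x = p ^ (k - 2) * p"
    by auto
  have "p \<noteq> 0"
    using assms(2) by auto
  then have ord_z: "ord (x [^] p) = p ^ (k - 2)"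
    using ord_pow[OF x(1)] x(2) by simp
  have "generate G {x [^] p} \<subseteq> {y \<in> carrier G. ord y dvd p ^ (k - 2)}"
    using x(1) generate_incl[of "{x [^] p}"] ord_dvd_ord_if_in_generate[OF assms(1), of "x [^] p"] ord_z
    by auto
  then have "card (generate G {x [^] p}) \<le> card {y \<in> carrier G. ord y dvd p ^ (k - 2)}"
    using assms(1) by (intro card_mono) auto
  then show ?thesis
    using generate_pow_card[of "x [^] p"] x(1) ord_z by simp
next
  case False
  have "ord x dvd p ^ (k - 2)" if x: "x \<in> carrier G" for x
  proof -
    obtain i where "i \<le> k - 1" and ord_x: "ord x = p ^ i"
      using exponent[OF x] assms(2) divides_primepow_nat by auto
    moreover have "i \<noteq> k - 1"
      using False x ord_x by auto
    ultimately have "i \<le> k - 2"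
      by linarith
    then show ?thesis
      by (simp add: ord_x le_imp_power_dvd)
  qed
  then have "{y \<in> carrier G. ord y dvd p ^ (k - 2)} = carrier G"
    by blast
  moreover have "p ^ (k - 2) \<le> p ^ k"
    using assms(2) prime_ge_1_nat by (intro power_increasing) auto
  ultimately show ?thesis
    using assms(3) by (simp add: order_def)
qed

lemma (in group) psi_le_if_ord_dvd_prime_power:
  assumes "finite (carrier G)" and "Factorial_Ring.prime p" and "order G = p ^ k" and "2 \<le> k"
    and exponent: "\<And>x. x \<in> carrier G \<Longrightarrow> ord x dvd p ^ (k - 1)"
  shows "psi G \<le> p ^ (k - 2) * p ^ (k - 2) + (p ^ k - p ^ (k - 2)) * p ^ (k - 1)"
proof -
  obtain T where T: "T \<subseteq> {y \<in> carrier G. ord y dvd p ^ (k - 2)}" "card T = p ^ (k - 2)" "finite T"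
    using obtain_subset_with_card_n[OF card_ord_dvd_prime_power_ge[OF assms]] .
  then have "T \<subseteq> carrier G"
    by blast
  have "p > 0"
    using assms(2) prime_gt_0_nat by blast
  have "psi G = (\<Sum>x\<in>T. ord x) + (\<Sum>x\<in>carrier G - T. ord x)"
    unfolding psi_def using \<open>T \<subseteq> carrier G\<close> assms(1) by (simp add: sum.subset_diff)
  also have "\<dots> \<le> card T * p ^ (k - 2) + card (carrier G - T) * p ^ (k - 1)"
  proof (rule add_mono)
    have "ord x \<le> p ^ (k - 2)" if "x \<in> T" for x
      using that T(1) \<open>p > 0\<close> by (intro dvd_imp_le) auto
    then show "(\<Sum>x\<in>T. ord x) \<le> card T * p ^ (k - 2)"
      using sum_bounded_above[of T ord] by simp
    have "ord x \<le> p ^ (k - 1)" if "x \<in> carrier G - T" for x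
      using that exponent \<open>p > 0\<close> by (intro dvd_imp_le) auto
    then show "(\<Sum>x\<in>carrier G - T. ord x) \<le> card (carrier G - T) * p ^ (k - 1)"
      using sum_bounded_above[of "carrier G - T" ord] by simp
  qed
  also have "card (carrier G - T) = p ^ k - p ^ (k - 2)"
    using \<open>T \<subseteq> carrier G\<close> T(2,3) assms(3) by (simp add: card_Diff_subset order_def)
  finally show ?thesis
    using T(2) by simp
qed

lemma psi_integer_mod_group_prime_power_ge:
  assumes "Factorial_Ring.prime p" and "1 \<le> k"
  shows "p ^ k * totient (p ^ k) + p ^ (k - 1) * totient (p ^ (k - 1))
           \<le> psi (integer_mod_group (p ^ k))"
proof -
  have "p ^ (k - 1) < p ^ k"
    using assms prime_gt_1_nat by (intro power_strict_increasing) auto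
  then have "p ^ k * totient (p ^ k) + p ^ (k - 1) * totient (p ^ (k - 1))
               = (\<Sum>d\<in>{p ^ k, p ^ (k - 1)}. d * totient d)"
    by simp
  also have "\<dots> \<le> (\<Sum>d | d dvd p ^ k. d * totient d)"
    using assms prime_gt_0_nat by (intro sum_mono2) (auto simp: le_imp_power_dvd)
  also have "\<dots> = psi (integer_mod_group (p ^ k))"
    using assms prime_gt_0_nat by (simp add: psi_integer_mod_group)
  finally show ?thesis .
qed

(* The two sides are the bounds above for psi(G) and psi(C_(p^k)), written with q = p^(k-2). *)
lemma psi_ratio_inequality:
  fixes p q :: nat
  assumes "3 \<le> p"
  shows "43 * (q * q + (p * p * q - q) * (p * q))
           \<le> 19 * (p * p * q * (p * q * (p - 1)) + p * q * (q * (p - 1)))"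
proof -
  obtain t where p: "p = t + 3"
    using assms by (metis add.commute le_Suc_ex)
  have "p * p * q - q = (t * t + 6 * t + 8) * q" and "p - 1 = t + 2"
    unfolding p by (simp_all add: algebra_simps)
  then show ?thesis
    unfolding p by (simp add: algebra_simps)
qed

lemma not_cyclic_odd_prime_power_psi_bound:
  assumes "group G" and "finite (carrier G)" and "\<not> cyclic_group G"
    and "Factorial_Ring.prime p" and "3 \<le> p" and "order G = p ^ k"
  shows "43 * psi G \<le> 19 * psi (integer_mod_group (order G))"
proof -
  interpret group G by fact
  have "2 \<le> k"
    using not_cyclic_prime_power_order_2_le assms(2-4,6) .
  then obtain j where k: "k = j + 2"
    using le_Suc_ex by (metis add.commute)
  define q where "q = p ^ j"
  have powers: "p ^ k = p * p * q" "p ^ (k - 1) = p * q" "p ^ (k - 2) = q"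
    unfolding q_def k by (simp_all add: numeral_2_eq_2)
  have upper: "psi G \<le> q * q + (p * p * q - q) * (p * q)"
    using psi_le_if_ord_dvd_prime_power[OF assms(2,4,6) \<open>2 \<le> k\<close>]
      not_cyclic_ord_dvd_prime_power[OF assms(2-4,6)]
    unfolding powers by blast
  have "totient (p ^ k) = p ^ (k - 1) * (p - 1)"
    and "totient (p ^ (k - 1)) = p ^ (k - 2) * (p - 1)"
    using totient_prime_power[OF assms(4), of k] totient_prime_power[OF assms(4), of "k - 1"]
      \<open>2 \<le> k\<close> by (simp_all add: diff_diff_left numeral_2_eq_2)
  then have lower: "p * p * q * (p * q * (p - 1)) + p * q * (q * (p - 1))
                      \<le> psi (integer_mod_group (order G))"
    using psi_integer_mod_group_prime_power_ge[OF assms(4), of k] \<open>2 \<le> k\<close> assms(6)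
    unfolding powers by simp
  have "43 * psi G \<le> 43 * (q * q + (p * p * q - q) * (p * q))"
    using upper by simp
  also have "\<dots> \<le> 19 * (p * p * q * (p * q * (p - 1)) + p * q * (q * (p - 1)))"
    using psi_ratio_inequality[OF assms(5)] .
  also have "\<dots> \<le> 19 * psi (integer_mod_group (order G))"
    using lower by simp
  finally show ?thesis .
qed

theorem corollary3p2:
  fixes G :: "('a, 'b) monoid_scheme"
  assumes "group G"
    and "finite (carrier G)"
    and "\<not> cyclic_group G"
    and "\<exists>p k. Factorial_Ring.prime (p::nat) \<and> order G = p ^ k"
    and "psi' G > 19 / 43"
  shows "\<exists>k. order G = 2 ^ k"
proof (rule ccontr)
  assume not_2_group: "\<nexists>k. order G = 2 ^ k"
  obtain p k where p: "Factorial_Ring.prime (p::nat)" and order: "order G = p ^ k"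
    using assms(4) by blast
  have "p \<noteq> 2"
    using not_2_group order by blast
  then have "3 \<le> p"
    using prime_ge_2_nat[OF p] by linarith
  then have "43 * psi G \<le> 19 * psi (integer_mod_group (order G))"
    using not_cyclic_odd_prime_power_psi_bound[OF assms(1-3) p _ order] by blast
  then have "psi' G \<le> 19 / 43"
    \<comment> \<open>no positivity of the denominator is needed, as x / 0 = 0\<close>
    unfolding psi'_def by (cases "psi (integer_mod_group (order G)) = 0") (simp_all add: field_simps)
  then show False
    using assms(5) by simp
qed

end
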